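(* Let $0<L<\infty$, $\varphi\in(0,1)$, and $\kappa_f,\kappa_s,h_v,c_{p,f},\dot m_c,A_c,R,\mu_f,K_D,K_F,p_{HG}>0$, $T_b>0$, $q_{HG}\in\mathbb R$. Let $(T_f,T_s)$ be the unique solution on $[0,L]$ of $$-\varphi\kappa_fT_f''+c_{p,f}\frac{\dot m_c}{A_c}T_f'=h_v(T_s-T_f),\qquad (1-\varphi)\kappa_sT_s''=h_v(T_s-T_f)\quad\text{on }(0,L),$$ $$T_f(0)=T_s(0)=T_b,\quad (1-\varphi)\kappa_sT_s'(L)=q_{HG}-c_{p,f}\frac{\dot m_c}{A_c}(T_s(L)-T_f(L)),\quad T_f'(L)=\frac{h_vA_c}{c_{p,f}\dot m_c}(T_s(L)-T_f(L)).$$ Assume $q_{HG}>0$ and $$\frac{p_{HG}}{R\,T_f(L)}>\frac{\dot m_c}{\varphi A_c}\frac{1}{\sqrt{R\,T_b}}.$$ Define $$\overline N(y,\rho)=\frac{R\,(c_{p,f}\dot m_c)^{-1}h_vA_c\,\rho^2\,(T_s(y)-T_f(y))+\frac{\dot m_c}{A_c}\Big(\frac{\mu_f}{K_D}+\frac{\dot m_c}{K_FA_c}\Big)}{\varphi^{-2}\big(\frac{\dot m_c}{A_c}\big)^2-R\,T_f(y)\,\rho^2}.$$ Then the backward initial value problem $$\rho_f'(y)=\overline N(y,\rho_f(y))\,\rho_f(y),\ y\in(0,L),\qquad \rho_f(L)=\frac{p_{HG}}{R\,T_f(L)}$$ has a unique solution on $[0,L]$. In particular, this density $\rho_f$ is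 positive and strictly monotonically decreasing.
   Context: $\rho_f$ is the coolant density, $T_f,T_s$ fluid and solid temperatures, $R$ the specific gas constant, $\mu_f$ dynamic viscosity, $K_D$ permeability, $K_F$ Forchheimer coefficient, $p_{HG}$ hot gas pressure at the interface. *)

theory Defs
  imports "HOL-Analysis.Analysis"
begin

definition Nbar ::
  "real \<Rightarrow> real \<Rightarrow> real \<Rightarrow> real \<Rightarrow> real \<Rightarrow> real \<Rightarrow> real \<Rightarrow> real \<Rightarrow> real \<Rightarrow>
   (real \<Rightarrow> real) \<Rightarrow> (real \<Rightarrow> real) \<Rightarrow> real \<Rightarrow> real \<Rightarrow> real" where
  "Nbar \<phi> cpf mc Ac R \<mu>f KD KF hv Tf Ts y \<rho> =
     (R * inverse (cpf * mc) * hv * Ac * \<rho>^2 * (Ts y - Tf y)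
        + (mc / Ac) * (\<mu>f / KD + mc / (KF * Ac)))
     / (inverse (\<phi>^2) * (mc / Ac)^2 - R * Tf y * \<rho>^2)"

definition density_solution ::
  "real \<Rightarrow> real \<Rightarrow> real \<Rightarrow> real \<Rightarrow> real \<Rightarrow> real \<Rightarrow> real \<Rightarrow> real \<Rightarrow> real \<Rightarrow> real \<Rightarrow>
   (real \<Rightarrow> real) \<Rightarrow> (real \<Rightarrow> real) \<Rightarrow> real \<Rightarrow> (real \<Rightarrow> real) \<Rightarrow> bool" where
  "density_solution L \<phi> cpf mc Ac R \<mu>f KD KF hv Tf Ts \<rho>L \<rho> \<longleftrightarrow>
     continuous_on {0..L} \<rho> \<and>
     (\<forall>y\<in>{0<..<L}.
        inverse (\<phi>^2) * (mc / Ac)^2 - R * Tf y * (\<rho> y)^2 \<noteq> 0 \<and>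
        (\<rho> has_real_derivative
           (Nbar \<phi> cpf mc Ac R \<mu>f KD KF hv Tf Ts y (\<rho> y) * \<rho> y)) (at y)) \<and>
     \<rho> L = \<rho>L"

end

theory Submission
  imports Defs
begin

(* The temperatures obey a maximum principle. At a negative minimum of Ts - Tf the solid equation
   gives Ts'' < 0, while an integrating factor for the fluid equation (whose outflow condition
   controls Tf' at L) gives Tf'' >= 0; hence Tf <= Ts, and then Tf' >= 0, so Tf >= Tb.
   Consequently R Tf >= R Tb, and the hypothesis on the hot gas density puts the end value on the
   subsonic side of the sonic line on which the denominator of Nbar vanishes. A solution cannot
   cross that line, so Nbar < 0 along it: every solution decreases strictly and stays above its end
   value. There the right-hand side is Lipschitz, which gives uniqueness by a Gronwall argument
   and, after freezing the right-hand side below the end value, existence by Banach's fixed point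
   theorem in a Bielecki norm. *)

lemma deriv_nonpos_at_right_endpoint_min:
  fixes f :: "real \<Rightarrow> real"
  assumes "a < b" and min: "\<forall>y\<in>{a..b}. f b \<le> f y"
    and "(f has_real_derivative D) (at b within {a..b})"
  shows "D \<le> 0"
proof -
  have "((\<lambda>y. (f y - f b) / (y - b)) \<longlongrightarrow> D) (at_left b)"
    using assms by (simp add: has_field_derivative_iff at_within_Icc_at_left)
  moreover have "eventually (\<lambda>y. (f y - f b) / (y - b) \<le> 0) (at_left b)"
  proof -
    have "eventually (\<lambda>y. a < y \<and> y < b) (at_left b)"
      using \<open>a < b\<close> by (intro eventually_at_leftI[of a]) auto
    then show ?thesis
      by eventually_elim (use min in \<open>auto intro: divide_nonneg_neg\<close>)
  qed
  ultimately show ?thesis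
    by (rule tendsto_upperbound) (simp add: trivial_limit_at_left_real)
qed

lemma deriv2_nonneg_at_interior_min:
  fixes f f' :: "real \<Rightarrow> real"
  assumes "a < y0" "y0 < b" and min: "\<forall>y\<in>{a..b}. f y0 \<le> f y"
    and df: "\<And>y. a < y \<Longrightarrow> y < b \<Longrightarrow> (f has_real_derivative f' y) (at y)"
    and ddf: "(f' has_real_derivative d) (at y0)"
  shows "0 \<le> d"
proof (rule ccontr)
  assume "\<not> 0 \<le> d"
  have "f' y0 = 0"
  proof (rule DERIV_local_min[OF df[OF assms(1,2)]])
    show "0 < min (y0 - a) (b - y0)" using assms by simp
    show "\<forall>y. \<bar>y0 - y\<bar> < min (y0 - a) (b - y0) \<longrightarrow> f y0 \<le> f y"
      using min by (auto simp: abs_less_iff)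
  qed
  moreover obtain e where "e > 0" and e: "\<And>h. h > 0 \<Longrightarrow> h < e \<Longrightarrow> f' (y0 + h) < f' y0"
    using DERIV_neg_dec_right[OF ddf] \<open>\<not> 0 \<le> d\<close> by force
  obtain h where "0 < h" "h < e" "h < b - y0"
    using field_lbound_gt_zero[of e "b - y0"] \<open>e > 0\<close> \<open>y0 < b\<close> by auto
  define z where "z = y0 + h"
  have z: "y0 < z" "z < b" "z - y0 < e"
    using \<open>0 < h\<close> \<open>h < e\<close> \<open>h < b - y0\<close> by (auto simp: z_def)
  have "f z < f y0"
  proof (rule DERIV_neg_imp_decreasing_open[OF \<open>y0 < z\<close>])
    fix x assume "y0 < x" "x < z"
    then have "(f has_real_derivative f' x) (at x)" "f' x < 0"
      using df[of x] e[of "x - y0"] \<open>f' y0 = 0\<close> z assms by auto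
    then show "\<exists>l. (f has_real_derivative l) (at x) \<and> l < 0" by blast
  next
    show "continuous_on {y0..z} f"
      by (rule DERIV_continuous_on[of _ _ f'])
        (use df z assms in \<open>auto intro: has_field_derivative_at_within\<close>)
  qed
  moreover have "f y0 \<le> f z" using min z assms by auto
  ultimately show False by simp
qed

text \<open>The integrating factor \<open>exp (- c x)\<close> makes \<open>f x exp (- c x)\<close> nonincreasing.\<close>
lemma deriv_le_mult_imp_le_of_nonpos:
  fixes f f' :: "real \<Rightarrow> real"
  assumes "0 \<le> c"
    and df: "\<And>x. x \<in> {a<..<b} \<Longrightarrow> (f has_real_derivative f' x) (at x)"
    and le: "\<And>x. x \<in> {a<..<b} \<Longrightarrow> f' x \<le> c * f x"
    and y: "y \<in> {a<..<b}" "f y \<le> 0" and x: "y \<le> x" "x < b"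
  shows "f x \<le> f y"
proof -
  define g where "g x = f x * exp (- c * x)" for x
  have "g x \<le> g y"
  proof (rule DERIV_nonpos_imp_decreasing_open[OF \<open>y \<le> x\<close>])
    fix z assume "y < z" "z < x"
    then have z: "z \<in> {a<..<b}" using x y by auto
    have "(g has_real_derivative (f' z - c * f z) * exp (- c * z)) (at z)"
      unfolding g_def using df[OF z] by (auto intro!: derivative_eq_intros simp: algebra_simps)
    moreover have "(f' z - c * f z) * exp (- c * z) \<le> 0"
      using le[OF z] by (simp add: mult_nonpos_nonneg)
    ultimately show "\<exists>l. (g has_real_derivative l) (at z) \<and> l \<le> 0" by blast
  next
    have "continuous_on {y..x} f"
      by (rule continuous_at_imp_continuous_on) (use x y in \<open>auto intro!: DERIV_isCont df\<close>)
    then show "continuous_on {y..x} g"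
      unfolding g_def by (intro continuous_intros)
  qed
  then have "f x \<le> f y * exp (c * (x - y))"
    by (simp add: g_def exp_diff exp_minus field_simps algebra_simps)
  also have "\<dots> \<le> f y * 1"
    using y x \<open>0 \<le> c\<close> by (intro mult_left_mono_neg) auto
  finally show ?thesis by simp
qed

lemma deriv_nonneg_of_deriv2_le:
  fixes w w' w'' :: "real \<Rightarrow> real"
  assumes "a < b" "0 \<le> c"
    and dw: "\<And>x. x \<in> {a..b} \<Longrightarrow> (w has_real_derivative w' x) (at x within {a..b})"
    and dw': "\<And>x. x \<in> {a<..<b} \<Longrightarrow> (w' has_real_derivative w'' x) (at x)"
    and le: "\<And>x. x \<in> {a<..<b} \<Longrightarrow> w'' x \<le> c * w' x"
    and "0 \<le> w' b"
    and y: "y \<in> {a<..<b}"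
  shows "0 \<le> w' y"
proof (rule ccontr)
  assume neg: "\<not> 0 \<le> w' y"
  txt \<open>By the previous lemma \<open>w' \<le> w' y\<close> on \<open>[y, b)\<close>, so \<open>w - w' y x\<close> decreases towards \<open>b\<close>,
    forcing \<open>w' b \<le> w' y < 0\<close>.\<close>
  define k where "k x = w x - w' y * x" for x
  have "k b \<le> k x" if "x \<in> {y..b}" for x
  proof (rule DERIV_nonpos_imp_decreasing_open[of x b k])
    show "x \<le> b" using that by simp
    fix z assume "x < z" "z < b"
    then have z: "z \<in> {a<..<b}" using that y by auto
    have "w' z \<le> w' y"
      using deriv_le_mult_imp_le_of_nonpos[OF \<open>0 \<le> c\<close> dw' le y] neg \<open>x < z\<close> \<open>z < b\<close> that by auto
    moreover have "(k has_real_derivative w' z - w' y) (at z)"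
      unfolding k_def using dw[of z] z by (auto intro!: derivative_eq_intros simp: at_within_Icc_at)
    ultimately show "\<exists>l. (k has_real_derivative l) (at z) \<and> l \<le> 0" by auto
  next
    show "continuous_on {x..b} k"
      unfolding k_def using that y
      by (intro continuous_intros continuous_on_subset[OF DERIV_continuous_on[OF dw]]) auto
  qed
  moreover have "(k has_real_derivative w' b - w' y) (at b within {y..b})"
    unfolding k_def using y
    by (auto intro!: derivative_eq_intros DERIV_subset[OF dw[of b]])
  ultimately have "w' b - w' y \<le> 0"
    using y by (intro deriv_nonpos_at_right_endpoint_min[of y b k]) auto
  then show False using neg \<open>0 \<le> w' b\<close> by linarith
qed

lemma fluid_heat_flux_ge:
  fixes L \<alpha> a hv m :: real and Tf Ts Tf' Tf'' :: "real \<Rightarrow> real"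
  assumes "0 < L" and pos: "0 < \<alpha>" "0 < a" "0 \<le> hv"
    and dTf: "\<And>y. y \<in> {0..L} \<Longrightarrow> (Tf has_real_derivative Tf' y) (at y within {0..L})"
    and ddTf: "\<And>y. y \<in> {0<..<L} \<Longrightarrow> (Tf' has_real_derivative Tf'' y) (at y)"
    and ode_f: "\<And>y. y \<in> {0<..<L} \<Longrightarrow> - \<alpha> * Tf'' y + a * Tf' y = hv * (Ts y - Tf y)"
    and bc_f: "a * Tf' L = hv * (Ts L - Tf L)"
    and gap_ge: "\<forall>y\<in>{0..L}. m \<le> Ts y - Tf y"
    and y: "y \<in> {0<..<L}"
  shows "hv * m \<le> a * Tf' y"
proof -
  have heat_ge: "hv * m \<le> hv * (Ts y - Tf y)" if "y \<in> {0..L}" for y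
    using gap_ge that \<open>0 \<le> hv\<close> by (simp add: mult_left_mono)
  have "0 \<le> a * Tf' y - hv * m"
  proof (rule deriv_nonneg_of_deriv2_le[of 0 L "a / \<alpha>" "\<lambda>x. a * Tf x - hv * m * x"
        "\<lambda>x. a * Tf' x - hv * m" "\<lambda>x. a * Tf'' x", OF \<open>0 < L\<close> _ _ _ _ _ y])
    show "0 \<le> a / \<alpha>" using pos by simp
    show "((\<lambda>x. a * Tf x - hv * m * x) has_real_derivative a * Tf' x - hv * m) (at x within {0..L})"
      if "x \<in> {0..L}" for x
      using dTf[OF that] by (auto intro!: derivative_eq_intros)
    show "((\<lambda>x. a * Tf' x - hv * m) has_real_derivative a * Tf'' x) (at x)"
      if "x \<in> {0<..<L}" for x
      using ddTf[OF that] by (auto intro!: derivative_eq_intros)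
    fix x assume x: "x \<in> {0<..<L}"
    have "\<alpha> * Tf'' x \<le> a * Tf' x - hv * m" using ode_f[OF x] heat_ge[of x] x by auto
    then have "a / \<alpha> * (\<alpha> * Tf'' x) \<le> a / \<alpha> * (a * Tf' x - hv * m)"
      using pos by (intro mult_left_mono) auto
    then show "a * Tf'' x \<le> a / \<alpha> * (a * Tf' x - hv * m)" using pos by simp
  next
    show "0 \<le> a * Tf' L - hv * m" using bc_f heat_ge[of L] \<open>0 < L\<close> by simp
  qed
  then show ?thesis by simp
qed

lemma temperature_gap_nonneg:
  fixes L \<alpha> \<beta> a hv q :: real and Tf Ts Tf' Ts' Tf'' Ts'' :: "real \<Rightarrow> real"
  assumes "0 < L" and pos: "0 < \<alpha>" "0 < \<beta>" "0 < a" "0 < hv" "0 \<le> q"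
    and dTf: "\<And>y. y \<in> {0..L} \<Longrightarrow> (Tf has_real_derivative Tf' y) (at y within {0..L})"
    and dTs: "\<And>y. y \<in> {0..L} \<Longrightarrow> (Ts has_real_derivative Ts' y) (at y within {0..L})"
    and ddTf: "\<And>y. y \<in> {0<..<L} \<Longrightarrow> (Tf' has_real_derivative Tf'' y) (at y)"
    and ddTs: "\<And>y. y \<in> {0<..<L} \<Longrightarrow> (Ts' has_real_derivative Ts'' y) (at y)"
    and ode_f: "\<And>y. y \<in> {0<..<L} \<Longrightarrow> - \<alpha> * Tf'' y + a * Tf' y = hv * (Ts y - Tf y)"
    and ode_s: "\<And>y. y \<in> {0<..<L} \<Longrightarrow> \<beta> * Ts'' y = hv * (Ts y - Tf y)"
    and bc_0: "Tf 0 = Ts 0"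
    and bc_s: "\<beta> * Ts' L = q - a * (Ts L - Tf L)"
    and bc_f: "a * Tf' L = hv * (Ts L - Tf L)"
  shows "\<forall>y\<in>{0..L}. Tf y \<le> Ts y"
proof -
  define \<theta> where "\<theta> y = Ts y - Tf y" for y
  have d\<theta>: "(\<theta> has_real_derivative Ts' y - Tf' y) (at y within {0..L})" if "y \<in> {0..L}" for y
    unfolding \<theta>_def using dTf[OF that] dTs[OF that] by (auto intro!: derivative_eq_intros)
  obtain y0 where y0: "y0 \<in> {0..L}" and min: "\<forall>y\<in>{0..L}. \<theta> y0 \<le> \<theta> y"
    using continuous_attains_inf[OF compact_Icc _ DERIV_continuous_on[OF d\<theta>]] \<open>0 < L\<close> by auto
  have "0 \<le> \<theta> y0"
  proof (rule ccontr)
    assume "\<not> 0 \<le> \<theta> y0"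
    then have "0 < y0" using y0 bc_0 by (cases "y0 = 0") (auto simp: \<theta>_def)
    have neg: "a * \<theta> y0 < 0" "hv * \<theta> y0 < 0"
      using \<open>\<not> 0 \<le> \<theta> y0\<close> pos by (simp_all add: mult_pos_neg)
    show False
    proof (cases "y0 = L")
      case True
      have le: "Ts' L - Tf' L \<le> 0"
        using deriv_nonpos_at_right_endpoint_min[OF \<open>0 < L\<close> _ d\<theta>[of L]] min True \<open>0 < L\<close> by auto
      have "0 < \<beta> * Ts' L" using bc_s neg True \<open>0 \<le> q\<close> by (simp add: \<theta>_def)
      then have "0 < Ts' L" using pos by (simp add: zero_less_mult_iff)
      have "a * Tf' L < 0" using bc_f neg True by (simp add: \<theta>_def)
      then have "Tf' L < 0" using pos by (simp add: mult_less_0_iff)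
      with le \<open>0 < Ts' L\<close> show False by linarith
    next
      case False
      then have y0': "y0 \<in> {0<..<L}" using y0 \<open>0 < y0\<close> by auto
      have "hv * \<theta> y0 \<le> a * Tf' y0"
        using fluid_heat_flux_ge[OF \<open>0 < L\<close> pos(1,3) less_imp_le[OF pos(4)] dTf ddTf ode_f bc_f _ y0']
          min by (simp add: \<theta>_def)
      then have "0 \<le> \<alpha> * Tf'' y0" using ode_f[OF y0'] by (simp add: \<theta>_def)
      then have "0 \<le> Tf'' y0" using pos by (simp add: zero_le_mult_iff)
      have "\<beta> * Ts'' y0 < 0" using ode_s[OF y0'] neg by (simp add: \<theta>_def)
      then have "Ts'' y0 < 0" using pos by (simp add: mult_less_0_iff)
      moreover have "0 \<le> Ts'' y0 - Tf'' y0"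
      proof (rule deriv2_nonneg_at_interior_min[of 0 y0 L \<theta> "\<lambda>y. Ts' y - Tf' y"])
        show "(\<theta> has_real_derivative Ts' y - Tf' y) (at y)" if "0 < y" "y < L" for y
          using d\<theta>[of y] that by (simp add: at_within_Icc_at)
        show "((\<lambda>y. Ts' y - Tf' y) has_real_derivative Ts'' y0 - Tf'' y0) (at y0)"
          using ddTs[OF y0'] ddTf[OF y0'] by (auto intro!: derivative_eq_intros)
      qed (use y0' min in auto)
      ultimately show False using \<open>0 \<le> Tf'' y0\<close> by linarith
    qed
  qed
  then show ?thesis using min by (force simp: \<theta>_def)
qed

lemma fluid_temperature_mono:
  fixes L \<alpha> a hv :: real and Tf Ts Tf' Tf'' :: "real \<Rightarrow> real"
  assumes "0 < L" and pos: "0 < \<alpha>" "0 < a" "0 \<le> hv"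
    and dTf: "\<And>y. y \<in> {0..L} \<Longrightarrow> (Tf has_real_derivative Tf' y) (at y within {0..L})"
    and ddTf: "\<And>y. y \<in> {0<..<L} \<Longrightarrow> (Tf' has_real_derivative Tf'' y) (at y)"
    and ode_f: "\<And>y. y \<in> {0<..<L} \<Longrightarrow> - \<alpha> * Tf'' y + a * Tf' y = hv * (Ts y - Tf y)"
    and bc_f: "a * Tf' L = hv * (Ts L - Tf L)"
    and gap: "\<forall>y\<in>{0..L}. Tf y \<le> Ts y"
  shows "mono_on {0..L} Tf"
proof (rule mono_onI)
  fix x y assume xy: "x \<in> {0..L}" "y \<in> {0..L}" "x \<le> y"
  show "Tf x \<le> Tf y"
  proof (rule DERIV_nonneg_imp_increasing_open[OF \<open>x \<le> y\<close>])
    fix z assume "x < z" "z < y"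
    then have z: "z \<in> {0<..<L}" using xy by auto
    have "hv * 0 \<le> a * Tf' z"
      using gap by (intro fluid_heat_flux_ge[OF \<open>0 < L\<close> pos dTf ddTf ode_f bc_f _ z]) auto
    then have "0 \<le> Tf' z" using pos by (simp add: zero_le_mult_iff)
    moreover have "(Tf has_real_derivative Tf' z) (at z)"
      using dTf[of z] z by (simp add: at_within_Icc_at)
    ultimately show "\<exists>l. (Tf has_real_derivative l) (at z) \<and> 0 \<le> l" by blast
  next
    show "continuous_on {x..y} Tf"
      using continuous_on_subset[OF DERIV_continuous_on[OF dTf]] xy by auto
  qed
qed

text \<open>\<open>Nbar \<phi> cpf mc Ac R \<mu>f KD KF hv Tf Ts y \<rho> * \<rho> = density_rhs K M A (Ts y - Tf y) (R * Tf y) \<rho>\<close>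
  for \<open>K = R hv Ac / (cpf mc)\<close>, \<open>M = (mc / Ac) (\<mu>f / KD + mc / (KF Ac))\<close> and
  \<open>A = (mc / (\<phi> Ac))\<^sup>2\<close>.\<close>
definition density_rhs :: "real \<Rightarrow> real \<Rightarrow> real \<Rightarrow> real \<Rightarrow> real \<Rightarrow> real \<Rightarrow> real" where
  "density_rhs K M A \<theta> q r = (K * r^2 * \<theta> + M) / (A - q * r^2) * r"

lemma density_rhs_neg:
  assumes "0 \<le> K" "0 \<le> \<theta>" "0 < M" "A < q * r^2" "0 < r"
  shows "density_rhs K M A \<theta> q r < 0"
proof -
  have "0 < K * r^2 * \<theta> + M" using assms by (simp add: add_nonneg_pos)
  then have "(K * r^2 * \<theta> + M) / (A - q * r^2) < 0"
    using assms by (simp add: divide_pos_neg)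
  then show ?thesis
    unfolding density_rhs_def using \<open>0 < r\<close> by (rule mult_neg_pos)
qed

lemma inverse_quadratic_diff:
  fixes A q r1 r2 :: real
  assumes "A - q * r1^2 \<noteq> 0" "A - q * r2^2 \<noteq> 0"
  shows "r1 / (A - q * r1^2) - r2 / (A - q * r2^2)
    = (r1 - r2) * (A + q * (r1 * r2)) / ((A - q * r1^2) * (A - q * r2^2))"
  using assms by (simp add: field_simps) (simp add: algebra_simps power2_eq_square)

lemma inverse_quadratic_denominators_ge:
  fixes A q \<gamma> r1 r2 :: real
  assumes "0 \<le> \<gamma>" "A \<le> (1 - \<gamma>) * (q * r1^2)" "A \<le> (1 - \<gamma>) * (q * r2^2)" "0 \<le> q"
  shows "(\<gamma> * (q * (r1 * r2)))^2 \<le> (A - q * r1^2) * (A - q * r2^2)"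
proof -
  have "0 \<le> \<gamma> * (q * r1^2)" "0 \<le> \<gamma> * (q * r2^2)" using assms by simp_all
  moreover have "\<gamma> * (q * r1^2) \<le> q * r1^2 - A" "\<gamma> * (q * r2^2) \<le> q * r2^2 - A"
    using assms by (simp_all add: algebra_simps)
  ultimately have "\<gamma> * (q * r1^2) * (\<gamma> * (q * r2^2)) \<le> (q * r1^2 - A) * (q * r2^2 - A)"
    by (intro mult_mono) auto
  then show ?thesis by (simp add: power2_eq_square algebra_simps)
qed

lemma lipschitz_inverse_quadratic:
  fixes A qm r0 :: real
  assumes "0 \<le> A" "A < qm * r0^2" "0 < r0"
  obtains H where "\<And>q r1 r2. qm \<le> q \<Longrightarrow> r0 \<le> r1 \<Longrightarrow> r0 \<le> r2 \<Longrightarrow>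
    \<bar>r1 / (A - q * r1^2) - r2 / (A - q * r2^2)\<bar> \<le> H * \<bar>r1 - r2\<bar>"
proof
  define p0 where "p0 = qm * r0^2"
  define \<gamma> where "\<gamma> = 1 - A / p0"
  have "0 < p0" "0 < \<gamma>" "\<gamma> \<le> 1" and A: "A = (1 - \<gamma>) * p0"
    using assms by (auto simp: p0_def \<gamma>_def)
  then have "0 < qm" using \<open>0 < r0\<close> by (simp add: p0_def zero_less_mult_iff)
  fix q r1 r2 assume "qm \<le> q" "r0 \<le> r1" "r0 \<le> r2"
  then have p: "p0 \<le> q * r1^2" "p0 \<le> q * r2^2" "p0 \<le> q * (r1 * r2)"
    using \<open>0 < qm\<close> assms by (auto simp: p0_def power2_eq_square intro!: mult_mono)
  define s where "s = q * (r1 * r2)"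
  have "p0 \<le> s" "0 < s" using p \<open>0 < p0\<close> by (simp_all add: s_def)
  have "0 < A + s" using \<open>0 < s\<close> \<open>0 \<le> A\<close> by simp
  have "A < q * r1^2" "A < q * r2^2" using p \<open>A < qm * r0^2\<close> by (simp_all add: p0_def)
  have "0 < (A - q * r1^2) * (A - q * r2^2)"
    using \<open>A < q * r1^2\<close> \<open>A < q * r2^2\<close> by (simp add: mult_neg_neg)
  have den: "(\<gamma> * s)^2 \<le> (A - q * r1^2) * (A - q * r2^2)"
    unfolding s_def using p \<open>0 < \<gamma>\<close> \<open>\<gamma> \<le> 1\<close> \<open>0 < qm\<close> \<open>qm \<le> q\<close>
    by (intro inverse_quadratic_denominators_ge) (auto simp: A intro!: mult_left_mono)
  have "(A + s) / (\<gamma> * s)^2 = A / (\<gamma> * s)^2 + 1 / (\<gamma>^2 * s)"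
    using \<open>0 < s\<close> \<open>0 < \<gamma>\<close> by (simp add: field_simps power2_eq_square)
  also have "\<dots> \<le> A / (\<gamma> * p0)^2 + 1 / (\<gamma>^2 * p0)"
    using \<open>p0 \<le> s\<close> \<open>0 < p0\<close> \<open>0 < \<gamma>\<close> \<open>0 \<le> A\<close>
    by (intro add_mono divide_left_mono mult_left_mono power_mono) auto
  finally have factor: "(A + s) / (\<gamma> * s)^2 \<le> A / (\<gamma> * p0)^2 + 1 / (\<gamma>^2 * p0)" .
  have "r1 / (A - q * r1^2) - r2 / (A - q * r2^2)
      = (r1 - r2) * ((A + s) / ((A - q * r1^2) * (A - q * r2^2)))"
    using \<open>A < q * r1^2\<close> \<open>A < q * r2^2\<close> by (simp add: inverse_quadratic_diff s_def)
  moreover have "0 < (A + s) / ((A - q * r1^2) * (A - q * r2^2))"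
    using \<open>0 < A + s\<close> \<open>0 < (A - q * r1^2) * (A - q * r2^2)\<close> by simp
  ultimately have "\<bar>r1 / (A - q * r1^2) - r2 / (A - q * r2^2)\<bar>
      = \<bar>r1 - r2\<bar> * ((A + s) / ((A - q * r1^2) * (A - q * r2^2)))"
    by (metis abs_mult abs_of_pos)
  also have "\<dots> \<le> \<bar>r1 - r2\<bar> * ((A + s) / (\<gamma> * s)^2)"
    using den \<open>0 < s\<close> \<open>0 < \<gamma>\<close> \<open>0 < A + s\<close> \<open>0 < (A - q * r1^2) * (A - q * r2^2)\<close>
    by (intro mult_left_mono divide_left_mono) auto
  also have "\<dots> \<le> \<bar>r1 - r2\<bar> * (A / (\<gamma> * p0)^2 + 1 / (\<gamma>^2 * p0))"
    using factor by (rule mult_left_mono) simp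
  finally show "\<bar>r1 / (A - q * r1^2) - r2 / (A - q * r2^2)\<bar>
      \<le> (A / (\<gamma> * p0)^2 + 1 / (\<gamma>^2 * p0)) * \<bar>r1 - r2\<bar>"
    by (simp add: mult.commute)
qed

lemma density_rhs_lipschitz:
  assumes "0 \<le> A" "A < qm * r0^2" "0 < r0" "0 \<le> K" "0 \<le> M"
  obtains Lc where "\<And>\<theta> q r1 r2. 0 \<le> \<theta> \<Longrightarrow> \<theta> \<le> B \<Longrightarrow> qm \<le> q \<Longrightarrow> r0 \<le> r1 \<Longrightarrow> r0 \<le> r2 \<Longrightarrow>
    \<bar>density_rhs K M A \<theta> q r1 - density_rhs K M A \<theta> q r2\<bar> \<le> Lc * \<bar>r1 - r2\<bar>"
proof -
  obtain H where H: "\<And>q r1 r2. qm \<le> q \<Longrightarrow> r0 \<le> r1 \<Longrightarrow> r0 \<le> r2 \<Longrightarrow>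
      \<bar>r1 / (A - q * r1^2) - r2 / (A - q * r2^2)\<bar> \<le> H * \<bar>r1 - r2\<bar>"
    using lipschitz_inverse_quadratic[OF assms(1-3)] by blast
  have "0 < qm * r0^2" using assms by linarith
  then have "0 < qm" using \<open>0 < r0\<close> by (simp add: zero_less_mult_iff)
  show ?thesis
  proof (rule that)
    fix \<theta> q r1 r2 assume \<theta>: "0 \<le> \<theta>" "\<theta> \<le> B" and "qm \<le> q" and r: "r0 \<le> r1" "r0 \<le> r2"
    have "0 < q" using \<open>0 < qm\<close> \<open>qm \<le> q\<close> by linarith
    have den: "A - q * r^2 \<noteq> 0" if "r0 \<le> r" for r
    proof -
      have "qm * r0^2 \<le> q * r^2"
        using that \<open>qm \<le> q\<close> \<open>0 < qm\<close> \<open>0 < r0\<close> by (intro mult_mono power_mono) auto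
      then show ?thesis using \<open>A < qm * r0^2\<close> by linarith
    qed
    define h where "h r = r / (A - q * r^2)" for r
    define c where "c = K * \<theta> * A / q + M"
    have split: "density_rhs K M A \<theta> q r = - (K * \<theta> / q) * r + c * h r" if "r0 \<le> r" for r
      using den[OF that] \<open>0 < q\<close> unfolding density_rhs_def h_def c_def
      by (simp add: field_simps)
    have "0 \<le> K * B" using \<theta> \<open>0 \<le> K\<close> by simp
    have c: "0 \<le> c" "c \<le> K * B * A / qm + M"
      using \<theta> \<open>0 < q\<close> \<open>0 < qm\<close> \<open>qm \<le> q\<close> \<open>0 \<le> K * B\<close> assms
      by (auto simp: c_def intro!: frac_le mult_right_mono mult_left_mono)
    have "K * \<theta> / q \<le> K * B / qm"
      using \<theta> \<open>0 < qm\<close> \<open>qm \<le> q\<close> \<open>0 \<le> K * B\<close> \<open>0 \<le> K\<close> by (intro frac_le mult_left_mono) auto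
    have "\<bar>density_rhs K M A \<theta> q r1 - density_rhs K M A \<theta> q r2\<bar>
        = \<bar>- (K * \<theta> / q) * (r1 - r2) + c * (h r1 - h r2)\<bar>"
      unfolding split[OF r(1)] split[OF r(2)] by (simp add: right_diff_distrib)
    also have "\<dots> \<le> \<bar>- (K * \<theta> / q) * (r1 - r2)\<bar> + \<bar>c * (h r1 - h r2)\<bar>"
      by (rule abs_triangle_ineq)
    also have "\<dots> = K * \<theta> / q * \<bar>r1 - r2\<bar> + c * \<bar>h r1 - h r2\<bar>"
      using \<theta> \<open>0 < q\<close> \<open>0 \<le> K\<close> c by (simp add: abs_mult)
    also have "\<dots> \<le> K * B / qm * \<bar>r1 - r2\<bar> + (K * B * A / qm + M) * (H * \<bar>r1 - r2\<bar>)"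
      using \<open>K * \<theta> / q \<le> K * B / qm\<close> c H[OF \<open>qm \<le> q\<close> r] unfolding h_def
      by (intro add_mono mult_right_mono mult_mono) auto
    finally show "\<bar>density_rhs K M A \<theta> q r1 - density_rhs K M A \<theta> q r2\<bar>
        \<le> (K * B / qm + (K * B * A / qm + M) * H) * \<bar>r1 - r2\<bar>"
      by (simp add: algebra_simps)
  qed
qed

lemma has_integral_exp_reflected:
  fixes \<mu> b x :: real
  assumes "0 < \<mu>" "x \<le> b"
  shows "((\<lambda>s. exp (\<mu> * (b - s))) has_integral (exp (\<mu> * (b - x)) - 1) / \<mu>) {x..b}"
proof -
  have "((\<lambda>s. exp (\<mu> * (b - s))) has_integral
      (- exp (\<mu> * (b - b)) / \<mu>) - (- exp (\<mu> * (b - x)) / \<mu>)) {x..b}"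
    using assms
    by (intro fundamental_theorem_of_calculus)
      (auto intro!: derivative_eq_intros
        simp: has_real_derivative_iff_has_vector_derivative[symmetric])
  then show ?thesis by (simp add: diff_divide_distrib)
qed

lemma integral_diff_le_exp_weighted:
  fixes g1 g2 :: "real \<Rightarrow> real"
  assumes "0 < \<mu>" "x \<le> b"
    and "continuous_on {x..b} g1" "continuous_on {x..b} g2"
    and bound: "\<And>s. s \<in> {x..b} \<Longrightarrow> \<bar>g1 s - g2 s\<bar> \<le> C * exp (\<mu> * (b - s))"
  shows "\<bar>integral {x..b} g1 - integral {x..b} g2\<bar> \<le> C * ((exp (\<mu> * (b - x)) - 1) / \<mu>)"
proof -
  have exp: "((\<lambda>s. C * exp (\<mu> * (b - s))) has_integral C * ((exp (\<mu> * (b - x)) - 1) / \<mu>)) {x..b}"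
    using has_integral_exp_reflected[OF assms(1,2)] by (rule has_integral_mult_right)
  have "g1 integrable_on {x..b}" "g2 integrable_on {x..b}"
    using assms(3,4) by (simp_all add: integrable_continuous_interval)
  then have "\<bar>integral {x..b} g1 - integral {x..b} g2\<bar> = norm (integral {x..b} (\<lambda>s. g1 s - g2 s))"
    by (simp add: integral_diff)
  also have "\<dots> \<le> integral {x..b} (\<lambda>s. C * exp (\<mu> * (b - s)))"
    using \<open>g1 integrable_on {x..b}\<close> \<open>g2 integrable_on {x..b}\<close> exp bound
    by (intro integral_norm_bound_integral) (auto intro: integrable_diff has_integral_integrable)
  also have "\<dots> = C * ((exp (\<mu> * (b - x)) - 1) / \<mu>)"
    using exp by (rule integral_unique)
  finally show ?thesis .
qed

text \<open>The weight \<open>w\<close> turns the sup norm of \<open>\<eta>\<close> into Bielecki's norm of \<open>\<eta> / w\<close>; with the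
  exponent \<open>2 K + 1\<close> the integral operator of the backward problem halves distances in it.\<close>
lemma bielecki_contraction:
  fixes G :: "real \<Rightarrow> real \<Rightarrow> real" and \<eta>1 \<eta>2 :: "real \<Rightarrow>\<^sub>C real"
  assumes "0 \<le> K" "x \<in> {a..b}"
    and G_cont: "\<And>\<eta> :: real \<Rightarrow>\<^sub>C real. continuous_on {a..b} (\<lambda>s. G s (\<eta> s / w s))"
    and G_lip: "\<And>s r1 r2. s \<in> {a..b} \<Longrightarrow> \<bar>G s r1 - G s r2\<bar> \<le> K * \<bar>r1 - r2\<bar>"
    and w_def: "\<And>y. w y = exp (- (2 * K + 1) * (b - y))"
  shows "w x * \<bar>integral {x..b} (\<lambda>s. G s (\<eta>1 s / w s)) - integral {x..b} (\<lambda>s. G s (\<eta>2 s / w s))\<bar>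
    \<le> 1 / 2 * dist \<eta>1 \<eta>2"
proof -
  define \<mu> where "\<mu> = 2 * K + 1"
  define d where "d = dist \<eta>1 \<eta>2"
  have "0 < \<mu>" "K / \<mu> \<le> 1 / 2" using \<open>0 \<le> K\<close> by (auto simp: \<mu>_def field_simps)
  have w_pos: "0 < w y" for y by (simp add: w_def)
  have w_exp: "w y * exp (\<mu> * (b - y)) = 1" for y
    by (simp add: w_def \<mu>_def flip: exp_add) (simp add: algebra_simps)
  have "\<bar>integral {x..b} (\<lambda>s. G s (\<eta>1 s / w s)) - integral {x..b} (\<lambda>s. G s (\<eta>2 s / w s))\<bar>
      \<le> K * d * ((exp (\<mu> * (b - x)) - 1) / \<mu>)"
  proof (rule integral_diff_le_exp_weighted[OF \<open>0 < \<mu>\<close>])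
    show "continuous_on {x..b} (\<lambda>s. G s (\<eta>1 s / w s))" "continuous_on {x..b} (\<lambda>s. G s (\<eta>2 s / w s))"
      using \<open>x \<in> {a..b}\<close> by (auto intro: continuous_on_subset[OF G_cont])
    fix s assume s: "s \<in> {x..b}"
    have "\<bar>\<eta>1 s / w s - \<eta>2 s / w s\<bar> = dist (\<eta>1 s) (\<eta>2 s) * exp (\<mu> * (b - s))"
      using w_pos[of s] w_exp[of s]
      by (simp add: dist_real_def abs_div field_simps flip: diff_divide_distrib)
    also have "\<dots> \<le> d * exp (\<mu> * (b - s))"
      using dist_bounded[of \<eta>1 s \<eta>2] by (simp add: d_def)
    finally show "\<bar>G s (\<eta>1 s / w s) - G s (\<eta>2 s / w s)\<bar> \<le> K * d * exp (\<mu> * (b - s))"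
      using G_lip[of s "\<eta>1 s / w s" "\<eta>2 s / w s"] s \<open>x \<in> {a..b}\<close> \<open>0 \<le> K\<close>
      by (simp add: mult.assoc) (meson mult_left_mono order_trans)
  qed (use \<open>x \<in> {a..b}\<close> in auto)
  then have "w x * \<bar>integral {x..b} (\<lambda>s. G s (\<eta>1 s / w s)) - integral {x..b} (\<lambda>s. G s (\<eta>2 s / w s))\<bar>
      \<le> w x * (K * d * ((exp (\<mu> * (b - x)) - 1) / \<mu>))"
    using w_pos[of x] by (intro mult_left_mono) auto
  also have "\<dots> = K / \<mu> * d * (w x * exp (\<mu> * (b - x)) - w x)"
    by (simp add: field_simps)
  also have "\<dots> = K / \<mu> * d * (1 - w x)"
    by (simp add: w_exp)
  also have "\<dots> \<le> K / \<mu> * d"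
  proof (rule mult_left_le)
    show "1 - w x \<le> 1" using w_pos[of x] by simp
    show "0 \<le> K / \<mu> * d" using \<open>0 \<le> K\<close> \<open>0 < \<mu>\<close> by (simp add: d_def)
  qed
  also have "\<dots> \<le> 1 / 2 * d"
    using \<open>K / \<mu> \<le> 1 / 2\<close> by (rule mult_right_mono) (simp add: d_def)
  finally show ?thesis by (simp add: d_def)
qed

lemma backward_integral_equation_solvable:
  fixes G :: "real \<Rightarrow> real \<Rightarrow> real"
  assumes "a \<le> b" "0 \<le> K"
    and G_cont: "\<And>\<rho>. continuous_on {a..b} \<rho> \<Longrightarrow> continuous_on {a..b} (\<lambda>s. G s (\<rho> s))"
    and G_lip: "\<And>s r1 r2. s \<in> {a..b} \<Longrightarrow> \<bar>G s r1 - G s r2\<bar> \<le> K * \<bar>r1 - r2\<bar>"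
  obtains \<rho> where "continuous_on {a..b} \<rho>"
    and "\<And>y. y \<in> {a..b} \<Longrightarrow> \<rho> y = \<rho>b - integral {y..b} (\<lambda>s. G s (\<rho> s))"
proof -
  define w where "w y = exp (- (2 * K + 1) * (b - y))" for y
  have w_pos: "0 < w y" for y by (simp add: w_def)
  have cont_div_w: "continuous_on S (\<lambda>s. \<eta> s / w s)" for S and \<eta> :: "real \<Rightarrow>\<^sub>C real"
    unfolding w_def by (intro continuous_intros) auto
  define T where "T \<eta> y = w y * (\<rho>b - integral {y..b} (\<lambda>s. G s (\<eta> s / w s)))"
    for \<eta> :: "real \<Rightarrow>\<^sub>C real" and y
  have "continuous_on (cbox a b) (T \<eta>)" for \<eta>
    unfolding T_def cbox_interval w_def
    by (intro continuous_intros indefinite_integral_continuous_1' integrable_continuous_interval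
        G_cont[OF cont_div_w, unfolded w_def])
  then have "\<forall>\<eta>. \<exists>g :: real \<Rightarrow>\<^sub>C real. \<forall>y. g y = T \<eta> (clamp a b y)"
    by (metis continuous_on_cbox_bcontfunE)
  from choice[OF this] obtain \<Phi> :: "(real \<Rightarrow>\<^sub>C real) \<Rightarrow> (real \<Rightarrow>\<^sub>C real)"
    where \<Phi>: "\<And>\<eta> y. \<Phi> \<eta> y = T \<eta> (clamp a b y)" by blast
  have "dist (\<Phi> \<eta>1) (\<Phi> \<eta>2) \<le> 1 / 2 * dist \<eta>1 \<eta>2" for \<eta>1 \<eta>2
  proof (rule dist_bound)
    fix y
    have x: "clamp a b y \<in> {a..b}" using clamp_in_interval[of a b y] \<open>a \<le> b\<close> by simp
    have "dist (\<Phi> \<eta>1 y) (\<Phi> \<eta>2 y) = w (clamp a b y) *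
        \<bar>integral {clamp a b y..b} (\<lambda>s. G s (\<eta>1 s / w s))
          - integral {clamp a b y..b} (\<lambda>s. G s (\<eta>2 s / w s))\<bar>"
      using w_pos[of "clamp a b y"]
      by (simp add: \<Phi> T_def dist_real_def abs_mult abs_minus_commute flip: right_diff_distrib)
    also have "\<dots> \<le> 1 / 2 * dist \<eta>1 \<eta>2"
      using \<open>0 \<le> K\<close> x G_cont[OF cont_div_w] G_lip w_def by (rule bielecki_contraction)
    finally show "dist (\<Phi> \<eta>1 y) (\<Phi> \<eta>2 y) \<le> 1 / 2 * dist \<eta>1 \<eta>2" .
  qed
  then obtain \<eta> where "\<Phi> \<eta> = \<eta>"
    using banach_fix_type[of "1/2" \<Phi>] by auto
  show ?thesis
  proof (rule that[of "\<lambda>y. \<eta> y / w y"])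
    show "continuous_on {a..b} (\<lambda>y. \<eta> y / w y)" by (rule cont_div_w)
    fix y assume "y \<in> {a..b}"
    then have "clamp a b y = y" by (intro clamp_cancel_cbox) (simp add: cbox_interval)
    then have "\<eta> y = T \<eta> y" using \<Phi>[of \<eta> y] \<open>\<Phi> \<eta> = \<eta>\<close> by simp
    then show "\<eta> y / w y = \<rho>b - integral {y..b} (\<lambda>s. G s (\<eta> s / w s))"
      using w_pos[of y] by (simp add: T_def)
  qed
qed

lemma integral_equation_has_real_derivative:
  fixes g \<rho> :: "real \<Rightarrow> real"
  assumes "continuous_on {a..b} g" and eq: "\<And>y. y \<in> {a..b} \<Longrightarrow> \<rho> y = \<rho>b - integral {y..b} g"
    and "y \<in> {a<..<b}"
  shows "(\<rho> has_real_derivative g y) (at y)"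
proof -
  have y: "y \<in> {a..b}" using assms(3) by auto
  have "((\<lambda>x. \<rho>b - integral {x..b} g) has_real_derivative g y) (at y within {a..b})"
    using integral_has_real_derivative'[OF assms(1) y] by (auto intro!: derivative_eq_intros)
  then have "(\<rho> has_real_derivative g y) (at y within {a..b})"
    by (rule has_field_derivative_transform_within[of _ _ _ _ 1]) (use y eq in auto)
  then show ?thesis using assms(3) by (simp add: at_within_Icc_at)
qed

lemma backward_ivp_unique:
  fixes F :: "real \<Rightarrow> real \<Rightarrow> real" and \<rho> \<sigma> :: "real \<Rightarrow> real"
  assumes F_lip: "\<And>y r1 r2. y \<in> {a..b} \<Longrightarrow> r0 \<le> r1 \<Longrightarrow> r0 \<le> r2 \<Longrightarrow>
      \<bar>F y r1 - F y r2\<bar> \<le> Lc * \<bar>r1 - r2\<bar>"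
    and "continuous_on {a..b} \<rho>" "continuous_on {a..b} \<sigma>"
    and d\<rho>: "\<And>y. y \<in> {a<..<b} \<Longrightarrow> (\<rho> has_real_derivative F y (\<rho> y)) (at y)"
    and d\<sigma>: "\<And>y. y \<in> {a<..<b} \<Longrightarrow> (\<sigma> has_real_derivative F y (\<sigma> y)) (at y)"
    and \<rho>_ge: "\<And>y. y \<in> {a..b} \<Longrightarrow> r0 \<le> \<rho> y" and \<sigma>_ge: "\<And>y. y \<in> {a..b} \<Longrightarrow> r0 \<le> \<sigma> y"
    and "\<rho> b = \<sigma> b" and "y \<in> {a..b}"
  shows "\<rho> y = \<sigma> y"
proof -
  define g where "g t = (\<rho> t - \<sigma> t)^2 * exp (2 * Lc * t)" for t
  have "g y \<le> g b"
  proof (rule DERIV_nonneg_imp_increasing_open[of y b g])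
    show "y \<le> b" using \<open>y \<in> {a..b}\<close> by simp
    show "continuous_on {y..b} g"
      unfolding g_def using \<open>y \<in> {a..b}\<close>
      by (intro continuous_intros continuous_on_subset[OF assms(2)] continuous_on_subset[OF assms(3)])
        auto
    fix z assume "y < z" "z < b"
    then have z: "z \<in> {a<..<b}" using \<open>y \<in> {a..b}\<close> by auto
    define u where "u = \<rho> z - \<sigma> z"
    define v where "v = F z (\<rho> z) - F z (\<sigma> z)"
    have "(g has_real_derivative 2 * exp (2 * Lc * z) * (u * v + Lc * u^2)) (at z)"
      unfolding g_def u_def v_def using d\<rho>[OF z] d\<sigma>[OF z]
      by (auto intro!: derivative_eq_intros simp: algebra_simps power2_eq_square)
    moreover have "\<bar>v\<bar> \<le> Lc * \<bar>u\<bar>"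
      unfolding u_def v_def using z by (intro F_lip \<rho>_ge \<sigma>_ge) auto
    then have "\<bar>u * v\<bar> \<le> Lc * u^2"
      using mult_left_mono[of "\<bar>v\<bar>" "Lc * \<bar>u\<bar>" "\<bar>u\<bar>"]
      by (simp add: abs_mult power2_eq_square mult_ac)
    then have "0 \<le> u * v + Lc * u^2"
      using abs_ge_minus_self[of "u * v"] by linarith
    ultimately show "\<exists>l. (g has_real_derivative l) (at z) \<and> 0 \<le> l" by auto
  qed
  moreover have "g b = 0" using \<open>\<rho> b = \<sigma> b\<close> by (simp add: g_def)
  ultimately have "(\<rho> y - \<sigma> y)^2 \<le> 0" by (simp add: g_def mult_le_0_iff)
  then show ?thesis by simp
qed

lemma neg_of_nonzero_on_interval:
  fixes f :: "real \<Rightarrow> real"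
  assumes "continuous_on {a..b} f" and nz: "\<And>y. y \<in> {a<..<b} \<Longrightarrow> f y \<noteq> 0" and "f b < 0"
    and y: "y \<in> {a<..b}"
  shows "f y < 0"
proof (rule ccontr)
  assume "\<not> f y < 0"
  moreover have "continuous_on {y..b} f" using continuous_on_subset[OF assms(1)] y by auto
  ultimately obtain x where "y \<le> x" "x \<le> b" "f x = 0"
    using IVT2'[of f b 0 y] \<open>f b < 0\<close> y by auto
  then show False using nz[of x] \<open>f b < 0\<close> y by (cases "x = b") auto
qed

locale density_ivp =
  fixes a b K M A qm \<rho>b :: real and \<theta> q :: "real \<Rightarrow> real"
  assumes a_less_b: "a < b"
    and K_nonneg: "0 \<le> K" and M_pos: "0 < M" and A_nonneg: "0 \<le> A"
    and \<theta>_cont: "continuous_on {a..b} \<theta>" and \<theta>_nonneg: "\<And>y. y \<in> {a..b} \<Longrightarrow> 0 \<le> \<theta> y"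
    and q_cont: "continuous_on {a..b} q" and q_ge: "\<And>y. y \<in> {a..b} \<Longrightarrow> qm \<le> q y"
    and \<rho>b_pos: "0 < \<rho>b" and subsonic: "A < qm * \<rho>b^2"
begin

definition solution :: "(real \<Rightarrow> real) \<Rightarrow> bool" where
  "solution \<sigma> \<longleftrightarrow> continuous_on {a..b} \<sigma> \<and>
     (\<forall>y\<in>{a<..<b}. A - q y * (\<sigma> y)^2 \<noteq> 0 \<and>
        (\<sigma> has_real_derivative density_rhs K M A (\<theta> y) (q y) (\<sigma> y)) (at y)) \<and>
     \<sigma> b = \<rho>b"

lemma qm_pos: "0 < qm"
proof -
  have "0 < qm * \<rho>b^2" using A_nonneg subsonic by linarith
  then show ?thesis using \<rho>b_pos by (simp add: zero_less_mult_iff)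
qed

lemma subsonic_at:
  assumes "y \<in> {a..b}" "\<rho>b \<le> r"
  shows "A < q y * r^2"
proof -
  have "qm * \<rho>b^2 \<le> q y * r^2"
    using assms q_ge[of y] qm_pos \<rho>b_pos by (intro mult_mono power_mono) auto
  then show ?thesis using subsonic by linarith
qed

text \<open>A solution cannot cross the sonic line \<open>A = q \<sigma>\<^sup>2\<close>, on which the right-hand side is
  singular; so it stays on the subsonic side of its end value, where the right-hand side is
  negative.\<close>
lemma solution_strict_decreasing:
  assumes "solution \<sigma>" "x \<in> {a..b}" "y \<in> {a..b}" "x < y"
  shows "\<sigma> y < \<sigma> x"
proof -
  have cont: "continuous_on {a..b} \<sigma>" and \<sigma>b: "\<sigma> b = \<rho>b"
    and sol: "\<And>y. y \<in> {a<..<b} \<Longrightarrow> A - q y * (\<sigma> y)^2 \<noteq> 0 \<and>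
        (\<sigma> has_real_derivative density_rhs K M A (\<theta> y) (q y) (\<sigma> y)) (at y)"
    using assms(1) by (auto simp: solution_def)
  have sonic: "A - q z * (\<sigma> z)^2 < 0" if "z \<in> {a<..b}" for z
  proof (rule neg_of_nonzero_on_interval[OF _ _ _ that])
    show "continuous_on {a..b} (\<lambda>z. A - q z * (\<sigma> z)^2)" by (intro continuous_intros cont q_cont)
    show "A - q b * (\<sigma> b)^2 < 0" using subsonic_at[of b \<rho>b] a_less_b \<sigma>b by simp
  qed (use sol in blast)
  have pos: "0 < \<sigma> z" if "z \<in> {a<..b}" for z
  proof -
    have "- \<sigma> z < 0"
    proof (rule neg_of_nonzero_on_interval[OF _ _ _ that])
      fix z assume "z \<in> {a<..<b}"
      then show "- \<sigma> z \<noteq> 0" using sonic[of z] A_nonneg by auto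
    qed (use cont \<sigma>b \<rho>b_pos in \<open>auto intro: continuous_intros\<close>)
    then show ?thesis by simp
  qed
  show ?thesis
  proof (rule DERIV_neg_imp_decreasing_open[OF \<open>x < y\<close>])
    fix z assume "x < z" "z < y"
    then have z: "z \<in> {a<..<b}" using assms by auto
    have "density_rhs K M A (\<theta> z) (q z) (\<sigma> z) < 0"
      using z sonic[of z] pos[of z] K_nonneg M_pos \<theta>_nonneg[of z] by (intro density_rhs_neg) auto
    then show "\<exists>l. (\<sigma> has_real_derivative l) (at z) \<and> l < 0" using sol[OF z] by blast
  qed (use cont assms in \<open>auto intro: continuous_on_subset\<close>)
qed

lemma solution_ge:
  assumes "solution \<sigma>" "y \<in> {a..b}"
  shows "\<rho>b \<le> \<sigma> y"
  using solution_strict_decreasing[OF assms(1) assms(2), of b] assms a_less_b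
  by (cases "y = b") (auto simp: solution_def)

lemma density_rhs_lipschitz_above:
  obtains Lc where "\<And>y r1 r2. y \<in> {a..b} \<Longrightarrow> \<rho>b \<le> r1 \<Longrightarrow> \<rho>b \<le> r2 \<Longrightarrow>
    \<bar>density_rhs K M A (\<theta> y) (q y) r1 - density_rhs K M A (\<theta> y) (q y) r2\<bar> \<le> Lc * \<bar>r1 - r2\<bar>"
proof -
  obtain ym where "ym \<in> {a..b}" and \<theta>_max: "\<And>y. y \<in> {a..b} \<Longrightarrow> \<theta> y \<le> \<theta> ym"
    using continuous_attains_sup[OF compact_Icc _ \<theta>_cont] a_less_b by auto
  obtain Lc where "\<And>\<theta>' q' r1 r2. 0 \<le> \<theta>' \<Longrightarrow> \<theta>' \<le> \<theta> ym \<Longrightarrow> qm \<le> q' \<Longrightarrow> \<rho>b \<le> r1 \<Longrightarrow> \<rho>b \<le> r2 \<Longrightarrow>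
      \<bar>density_rhs K M A \<theta>' q' r1 - density_rhs K M A \<theta>' q' r2\<bar> \<le> Lc * \<bar>r1 - r2\<bar>"
    using density_rhs_lipschitz[OF A_nonneg subsonic \<rho>b_pos K_nonneg less_imp_le[OF M_pos]] by blast
  then show ?thesis using that \<theta>_nonneg \<theta>_max q_ge by blast
qed

lemma solution_unique:
  assumes "solution \<sigma>1" "solution \<sigma>2" "y \<in> {a..b}"
  shows "\<sigma>1 y = \<sigma>2 y"
proof -
  obtain Lc where lip: "\<And>y r1 r2. y \<in> {a..b} \<Longrightarrow> \<rho>b \<le> r1 \<Longrightarrow> \<rho>b \<le> r2 \<Longrightarrow>
      \<bar>density_rhs K M A (\<theta> y) (q y) r1 - density_rhs K M A (\<theta> y) (q y) r2\<bar> \<le> Lc * \<bar>r1 - r2\<bar>"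
    using density_rhs_lipschitz_above by blast
  show ?thesis
    by (rule backward_ivp_unique[of a b \<rho>b _ Lc, OF lip])
      (use assms solution_ge in \<open>auto simp: solution_def\<close>)
qed

text \<open>Below \<open>\<rho>b\<close> the right-hand side is frozen at its value in \<open>\<rho>b\<close>, which makes it
  globally Lipschitz; a solution of the frozen equation never enters that region since it decreases
  towards \<open>\<rho>b\<close>.\<close>
definition truncated_rhs :: "real \<Rightarrow> real \<Rightarrow> real" where
  "truncated_rhs y r = density_rhs K M A (\<theta> y) (q y) (max r \<rho>b)"

lemma truncated_rhs_neg: "y \<in> {a..b} \<Longrightarrow> truncated_rhs y r < 0"
  unfolding truncated_rhs_def using subsonic_at[of y "max r \<rho>b"] \<rho>b_pos K_nonneg M_pos \<theta>_nonneg
  by (intro density_rhs_neg) auto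

lemma truncated_rhs_continuous:
  assumes "continuous_on {a..b} \<rho>"
  shows "continuous_on {a..b} (\<lambda>s. truncated_rhs s (\<rho> s))"
proof -
  have "\<forall>s\<in>{a..b}. A - q s * (max (\<rho> s) \<rho>b)^2 \<noteq> 0"
    using subsonic_at[OF _ max.cobounded2] by force
  then show ?thesis
    unfolding truncated_rhs_def density_rhs_def
    by (intro continuous_intros assms \<theta>_cont q_cont) auto
qed

lemma truncated_rhs_lipschitz:
  obtains Lc where "0 \<le> Lc"
    and "\<And>y r1 r2. y \<in> {a..b} \<Longrightarrow> \<bar>truncated_rhs y r1 - truncated_rhs y r2\<bar> \<le> Lc * \<bar>r1 - r2\<bar>"
proof -
  obtain Lc where lip: "\<And>y r1 r2. y \<in> {a..b} \<Longrightarrow> \<rho>b \<le> r1 \<Longrightarrow> \<rho>b \<le> r2 \<Longrightarrow>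
      \<bar>density_rhs K M A (\<theta> y) (q y) r1 - density_rhs K M A (\<theta> y) (q y) r2\<bar> \<le> Lc * \<bar>r1 - r2\<bar>"
    using density_rhs_lipschitz_above by blast
  have "0 \<le> Lc" using lip[of a \<rho>b "\<rho>b + 1"] a_less_b by simp
  moreover have "\<bar>truncated_rhs y r1 - truncated_rhs y r2\<bar> \<le> Lc * \<bar>r1 - r2\<bar>"
    if "y \<in> {a..b}" for y r1 r2
  proof -
    have "\<bar>truncated_rhs y r1 - truncated_rhs y r2\<bar> \<le> Lc * \<bar>max r1 \<rho>b - max r2 \<rho>b\<bar>"
      unfolding truncated_rhs_def using that by (intro lip) auto
    also have "\<dots> \<le> Lc * \<bar>r1 - r2\<bar>"
      using \<open>0 \<le> Lc\<close> by (intro mult_left_mono) (auto simp: max_def)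
    finally show ?thesis .
  qed
  ultimately show ?thesis using that by blast
qed

lemma solution_exists: "\<exists>\<sigma>. solution \<sigma>"
proof -
  obtain Lc where "0 \<le> Lc"
    and lip: "\<And>y r1 r2. y \<in> {a..b} \<Longrightarrow> \<bar>truncated_rhs y r1 - truncated_rhs y r2\<bar> \<le> Lc * \<bar>r1 - r2\<bar>"
    using truncated_rhs_lipschitz by blast
  obtain \<rho> where cont: "continuous_on {a..b} \<rho>"
    and eq: "\<And>y. y \<in> {a..b} \<Longrightarrow> \<rho> y = \<rho>b - integral {y..b} (\<lambda>s. truncated_rhs s (\<rho> s))"
    using backward_integral_equation_solvable[OF less_imp_le[OF a_less_b] \<open>0 \<le> Lc\<close>
        truncated_rhs_continuous lip] by blast
  have \<rho>_ge: "\<rho>b \<le> \<rho> y" if "y \<in> {a..b}" for y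
  proof -
    have "continuous_on {y..b} (\<lambda>s. - truncated_rhs s (\<rho> s))"
      using that
      by (intro continuous_intros continuous_on_subset[OF truncated_rhs_continuous[OF cont]]) auto
    then have "0 \<le> integral {y..b} (\<lambda>s. - truncated_rhs s (\<rho> s))"
      using that truncated_rhs_neg
      by (intro integral_nonneg integrable_continuous_interval) (auto intro: less_imp_le)
    then show ?thesis using eq[OF that] by (simp add: integral_neg)
  qed
  have "solution \<rho>"
    unfolding solution_def
  proof (intro conjI ballI)
    fix y assume y: "y \<in> {a<..<b}"
    show "A - q y * (\<rho> y)^2 \<noteq> 0"
      using subsonic_at[of y "\<rho> y"] \<rho>_ge[of y] y by force
    have "truncated_rhs y (\<rho> y) = density_rhs K M A (\<theta> y) (q y) (\<rho> y)"
      using \<rho>_ge[of y] y by (simp add: truncated_rhs_def max_absorb1)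
    then show "(\<rho> has_real_derivative density_rhs K M A (\<theta> y) (q y) (\<rho> y)) (at y)"
      using integral_equation_has_real_derivative[OF truncated_rhs_continuous[OF cont] eq y] by simp
  qed (use cont eq[of b] a_less_b in auto)
  then show ?thesis by blast
qed

end

lemma subsonic_condition_squared:
  fixes \<phi> mc Ac RT \<rho> :: real
  assumes "0 < \<phi>" "0 < mc" "0 < Ac" "0 < RT" and "\<rho> > mc / (\<phi> * Ac) * (1 / sqrt RT)"
  shows "inverse (\<phi>^2) * (mc / Ac)^2 < RT * \<rho>^2"
proof -
  have "0 < mc / (\<phi> * Ac) * (1 / sqrt RT)" using assms by simp
  then have "(mc / (\<phi> * Ac) * (1 / sqrt RT))^2 < \<rho>^2"
    using assms(5) by (intro power_strict_mono) auto
  then have "(mc / (\<phi> * Ac))^2 / RT < \<rho>^2"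
    using assms by (simp add: power_mult_distrib power_divide)
  then show ?thesis
    using assms by (simp add: field_simps power_mult_distrib power_divide)
qed

lemma density_ivp_instance:
  fixes L \<phi> hv cpf mc Ac R \<mu>f KD KF pHG Tb :: real and Tf Ts :: "real \<Rightarrow> real"
  assumes "0 < L" "0 < \<phi>"
    and pos: "0 < hv" "0 < cpf" "0 < mc" "0 < Ac" "0 < R" "0 < \<mu>f" "0 < KD" "0 < KF"
      "0 < pHG" "0 < Tb"
    and "continuous_on {0..L} Tf" "continuous_on {0..L} Ts"
    and Tf_ge: "\<And>y. y \<in> {0..L} \<Longrightarrow> Tb \<le> Tf y" and gap: "\<forall>y\<in>{0..L}. Tf y \<le> Ts y"
    and super: "pHG / (R * Tf L) > mc / (\<phi> * Ac) * (1 / sqrt (R * Tb))"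
  shows "density_ivp 0 L (R * inverse (cpf * mc) * hv * Ac) ((mc / Ac) * (\<mu>f / KD + mc / (KF * Ac)))
    (inverse (\<phi>^2) * (mc / Ac)^2) (R * Tb) (pHG / (R * Tf L)) (\<lambda>y. Ts y - Tf y) (\<lambda>y. R * Tf y)"
proof
  show "continuous_on {0..L} (\<lambda>y. Ts y - Tf y)" "continuous_on {0..L} (\<lambda>y. R * Tf y)"
    using assms by (auto intro!: continuous_intros)
  show "inverse (\<phi>^2) * (mc / Ac)^2 < R * Tb * (pHG / (R * Tf L))^2"
    using subsonic_condition_squared[OF \<open>0 < \<phi>\<close> pos(3,4)] pos super by simp
  show "0 < (mc / Ac) * (\<mu>f / KD + mc / (KF * Ac))"
    using pos by (intro mult_pos_pos add_pos_pos divide_pos_pos) auto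
  show "0 < pHG / (R * Tf L)"
    using pos Tf_ge[of L] \<open>0 < L\<close> by (intro divide_pos_pos mult_pos_pos) auto
qed (use \<open>0 < L\<close> pos gap Tf_ge in auto)

theorem proposition3:
  fixes L \<phi> \<kappa>f \<kappa>s hv cpf mc Ac R \<mu>f KD KF pHG Tb qHG :: real
    and Tf Ts Tf' Ts' Tf'' Ts'' :: "real \<Rightarrow> real"
  assumes L: "0 < L"
    and phi: "0 < \<phi>" "\<phi> < 1"
    and pos: "0 < \<kappa>f" "0 < \<kappa>s" "0 < hv" "0 < cpf" "0 < mc" "0 < Ac" "0 < R"
             "0 < \<mu>f" "0 < KD" "0 < KF" "0 < pHG" "0 < Tb"
    and dTf: "\<And>y. y \<in> {0..L} \<Longrightarrow> (Tf has_real_derivative Tf' y) (at y within {0..L})"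
    and dTs: "\<And>y. y \<in> {0..L} \<Longrightarrow> (Ts has_real_derivative Ts' y) (at y within {0..L})"
    and ddTf: "\<And>y. y \<in> {0<..<L} \<Longrightarrow> (Tf' has_real_derivative Tf'' y) (at y)"
    and ddTs: "\<And>y. y \<in> {0<..<L} \<Longrightarrow> (Ts' has_real_derivative Ts'' y) (at y)"
    and ode_f: "\<And>y. y \<in> {0<..<L} \<Longrightarrow>
                 - \<phi> * \<kappa>f * Tf'' y + cpf * (mc / Ac) * Tf' y = hv * (Ts y - Tf y)"
    and ode_s: "\<And>y. y \<in> {0<..<L} \<Longrightarrow>
                 (1 - \<phi>) * \<kappa>s * Ts'' y = hv * (Ts y - Tf y)"
    and bc0: "Tf 0 = Tb" "Ts 0 = Tb"
    and bcL_s: "(1 - \<phi>) * \<kappa>s * Ts' L = qHG - cpf * (mc / Ac) * (Ts L - Tf L)"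
    and bcL_f: "Tf' L = hv * Ac / (cpf * mc) * (Ts L - Tf L)"
    and qHG: "0 < qHG"
    and super: "pHG / (R * Tf L) > mc / (\<phi> * Ac) * (1 / sqrt (R * Tb))"
  shows "\<exists>\<rho>. density_solution L \<phi> cpf mc Ac R \<mu>f KD KF hv Tf Ts (pHG / (R * Tf L)) \<rho>
           \<and> (\<forall>\<sigma>. density_solution L \<phi> cpf mc Ac R \<mu>f KD KF hv Tf Ts (pHG / (R * Tf L)) \<sigma>
                   \<longrightarrow> (\<forall>y\<in>{0..L}. \<sigma> y = \<rho> y))
           \<and> (\<forall>y\<in>{0..L}. 0 < \<rho> y)
           \<and> (\<forall>x\<in>{0..L}. \<forall>y\<in>{0..L}. x < y \<longrightarrow> \<rho> y < \<rho> x)"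
proof -
  have coeffs: "0 < \<phi> * \<kappa>f" "0 < (1 - \<phi>) * \<kappa>s" "0 < cpf * (mc / Ac)"
    using phi pos by simp_all
  have ode_f': "- (\<phi> * \<kappa>f) * Tf'' y + cpf * (mc / Ac) * Tf' y = hv * (Ts y - Tf y)"
    if "y \<in> {0<..<L}" for y
    using ode_f[OF that] by simp
  have bc_f: "cpf * (mc / Ac) * Tf' L = hv * (Ts L - Tf L)"
    using bcL_f pos by (simp add: field_simps)
  have gap: "\<forall>y\<in>{0..L}. Tf y \<le> Ts y"
    using temperature_gap_nonneg[OF L coeffs pos(3) less_imp_le[OF qHG] dTf dTs ddTf ddTs
        ode_f' ode_s _ bcL_s bc_f] bc0 by simp
  have "mono_on {0..L} Tf"
    by (rule fluid_temperature_mono[OF L coeffs(1,3) less_imp_le[OF pos(3)] dTf ddTf ode_f' bc_f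
          gap])
  then have Tf_ge: "Tb \<le> Tf y" if "y \<in> {0..L}" for y
    using mono_onD[of "{0..L}" Tf 0 y] that L bc0 by auto
  interpret density_ivp 0 L "R * inverse (cpf * mc) * hv * Ac"
    "(mc / Ac) * (\<mu>f / KD + mc / (KF * Ac))" "inverse (\<phi>^2) * (mc / Ac)^2" "R * Tb"
    "pHG / (R * Tf L)" "\<lambda>y. Ts y - Tf y" "\<lambda>y. R * Tf y"
    using density_ivp_instance[OF L phi(1) pos(3-12) DERIV_continuous_on[OF dTf]
        DERIV_continuous_on[OF dTs] Tf_ge gap super] .
  let ?sol = "density_solution L \<phi> cpf mc Ac R \<mu>f KD KF hv Tf Ts (pHG / (R * Tf L))"
  have sol_iff: "?sol \<sigma> \<longleftrightarrow> solution \<sigma>" for \<sigma>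
    unfolding density_solution_def solution_def Nbar_def density_rhs_def by simp
  obtain \<rho> where \<rho>: "solution \<rho>" using solution_exists by blast
  show ?thesis
  proof (intro exI conjI)
    show "?sol \<rho>" using \<rho> sol_iff by blast
    show "\<forall>\<sigma>. ?sol \<sigma> \<longrightarrow> (\<forall>y\<in>{0..L}. \<sigma> y = \<rho> y)" using \<rho> sol_iff solution_unique by blast
    show "\<forall>y\<in>{0..L}. 0 < \<rho> y" using \<rho> solution_ge \<rho>b_pos by (meson less_le_trans)
    show "\<forall>x\<in>{0..L}. \<forall>y\<in>{0..L}. x < y \<longrightarrow> \<rho> y < \<rho> x" using \<rho> solution_strict_decreasing by blast
  qed
qed

end
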